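(* Let $T\in C_0(\mathbb{R}^N;\mathbb{Z})$ be an integral $0$-chain (a finite integer combination of points of $\mathbb{R}^N$) which is the boundary of an integral Lipschitz $1$-chain. Then $\mathrm{FV}(T)=\mathrm{FV}(2T)/2$.
   Context: An integral Lipschitz $1$-chain in $\mathbb{R}^N$ is a finite formal integer combination of Lipschitz maps $[0,1]\to\mathbb{R}^N$; its mass is $\sum_i|a_i|\,\mathrm{length}(\alpha_i)$. $\mathrm{FV}(T)=\inf\{\mathrm{mass}\,U: U \text{ integral Lipschitz } 1\text{-chain},\ \partial U=T\}$. *)

theory Defs
  imports "HOL-Analysis.Analysis"
begin

definition curve_length :: "(real \<Rightarrow> 'a::metric_space) \<Rightarrow> real" where
  "curve_length \<gamma> = Sup {(\<Sum>(s,t)\<leftarrow>zip ts (tl ts). dist (\<gamma> s) (\<gamma> t)) | ts.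
       sorted ts \<and> set ts \<subseteq> {0..1}}"

definition zero_chain :: "('a \<Rightarrow> int) \<Rightarrow> bool" where
  "zero_chain T \<longleftrightarrow> finite {x. T x \<noteq> 0}"

text \<open>Integral Lipschitz 1-chains: finite formal integer combinations of
  Lipschitz maps [0,1] -> R^N, represented as lists of (coefficient, map).\<close>
definition lip_chain :: "(int \<times> (real \<Rightarrow> 'a::metric_space)) list \<Rightarrow> bool" where
  "lip_chain U \<longleftrightarrow> (\<forall>(a,\<gamma>)\<in>set U. \<exists>C. C-lipschitz_on {0..1} \<gamma>)"

definition chain_boundary :: "(int \<times> (real \<Rightarrow> 'a)) list \<Rightarrow> ('a \<Rightarrow> int)" where
  "chain_boundary U = (\<lambda>x. \<Sum>(a,\<gamma>)\<leftarrow>U.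
       (if \<gamma> 1 = x then a else 0) - (if \<gamma> 0 = x then a else 0))"

definition chain_mass :: "(int \<times> (real \<Rightarrow> 'a::metric_space)) list \<Rightarrow> real" where
  "chain_mass U = (\<Sum>(a,\<gamma>)\<leftarrow>U. real_of_int \<bar>a\<bar> * curve_length \<gamma>)"

definition FV :: "('a::metric_space \<Rightarrow> int) \<Rightarrow> real" where
  "FV T = Inf {chain_mass U | U. lip_chain U \<and> chain_boundary U = T}"

end

theory Submission imports Defs begin

text \<open>Expand a filling of \<open>2T\<close> into curves with coefficients \<open>\<plusminus>1\<close> and read each
  curve as an edge from its initial to its final point (reversed if the coefficient is \<open>-1\<close>).
  Since the boundary is \<open>2T\<close>, every vertex of this multigraph has even degree, so the
  edges admit a balanced orientation: flipping some of them makes in-degree equal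
  out-degree everywhere. The unflipped and the flipped curves then form two
  sub-chains with the same boundary, which must be \<open>T\<close>; the lighter one has at most
  half the mass. Conversely, doubling a filling of \<open>T\<close> fills \<open>2T\<close> with twice the mass.\<close>

subsection \<open>Balanced orientations of even multigraphs\<close>

definition edge_degree :: "('a \<times> 'a) list \<Rightarrow> 'a \<Rightarrow> int" where
  "edge_degree E x = (\<Sum>e\<leftarrow>E. of_bool (fst e = x) + of_bool (snd e = x))"

definition oriented_flux :: "bool \<Rightarrow> 'a \<times> 'a \<Rightarrow> 'a \<Rightarrow> int" where
  "oriented_flux s e x = (if s then 1 else -1) * (of_bool (snd e = x) - of_bool (fst e = x))"

definition balanced_orientation :: "bool list \<Rightarrow> ('a \<times> 'a) list \<Rightarrow> bool" where
  "balanced_orientation S E \<longleftrightarrow>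
     length S = length E \<and> (\<forall>x. (\<Sum>(s,e)\<leftarrow>zip S E. oriented_flux s e x) = 0)"

lemma edge_degree_simps [simp]:
  "edge_degree [] x = 0"
  "edge_degree (e # E) x = of_bool (fst e = x) + of_bool (snd e = x) + edge_degree E x"
  "edge_degree (E @ F) x = edge_degree E x + edge_degree F x"
  by (simp_all add: edge_degree_def)

lemma edge_degree_nonzero_incident:
  "edge_degree E x \<noteq> 0 \<Longrightarrow> \<exists>e\<in>set E. fst e = x \<or> snd e = x"
proof (induction E)
  case (Cons e E)
  then show ?case by (cases "fst e = x \<or> snd e = x") auto
qed simp

lemma even_edge_degree_iff:
  "even (edge_degree E x) \<longleftrightarrow> even (\<Sum>e\<leftarrow>E. of_bool (snd e = x) - of_bool (fst e = x) :: int)"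
proof (induction E)
  case (Cons e E)
  have "edge_degree (e # E) x = (\<Sum>e\<leftarrow>e # E. of_bool (snd e = x) - of_bool (fst e = x))
          + 2 * of_bool (fst e = x) + (edge_degree E x - (\<Sum>e\<leftarrow>E. of_bool (snd e = x) - of_bool (fst e = x)))"
    by simp
  with Cons show ?case by (auto elim!: evenE)
qed simp

lemma balanced_orientation_loop:
  "balanced_orientation S E \<Longrightarrow> balanced_orientation (True # S) ((p, p) # E)"
  by (simp add: balanced_orientation_def oriented_flux_def)

text \<open>Reinsert an edge \<open>e\<close> between \<open>q\<close> and \<open>r\<close> into a graph in which the path
  \<open>p \<rightarrow> q \<rightarrow> r\<close> had been shortcut to the single edge \<open>(p, r)\<close>.\<close>
lemma balanced_orientation_unshortcut:
  assumes e: "e = (q, r) \<or> e = (r, q)"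
    and S: "balanced_orientation (s # S) ((p, r) # xs @ ys)"
  shows "\<exists>S'. balanced_orientation S' ((p, q) # xs @ e # ys)"
proof -
  define sx where "sx = take (length xs) S"
  define sy where "sy = drop (length xs) S"
  have len: "length sx = length xs" "length sy = length ys"
    using S by (simp_all add: balanced_orientation_def sx_def sy_def)
  define s' where "s' = (if e = (q, r) then s else \<not> s)"
  have split: "oriented_flux s (p, q) x + oriented_flux s' e x = oriented_flux s (p, r) x" for x
    using e by (auto simp: oriented_flux_def s'_def)
  have "S = sx @ sy" by (simp add: sx_def sy_def)
  then have shortcut: "oriented_flux s (p, r) x + (\<Sum>(s,e)\<leftarrow>zip sx xs. oriented_flux s e x)
               + (\<Sum>(s,e)\<leftarrow>zip sy ys. oriented_flux s e x) = 0" for x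
    using S len by (simp add: balanced_orientation_def add.assoc)
  have "oriented_flux s (p, q) x + ((\<Sum>(s,e)\<leftarrow>zip sx xs. oriented_flux s e x)
               + (oriented_flux s' e x + (\<Sum>(s,e)\<leftarrow>zip sy ys. oriented_flux s e x))) = 0" for x
    using shortcut[of x] split[of x] by linarith
  then have "balanced_orientation (s # sx @ s' # sy) ((p, q) # xs @ e # ys)"
    using len by (simp add: balanced_orientation_def)
  then show ?thesis ..
qed

theorem balanced_orientation_exists:
  "(\<And>x. even (edge_degree E x)) \<Longrightarrow> \<exists>S. balanced_orientation S E"
proof (induction "length E" arbitrary: E rule: less_induct)
  case less
  show ?case
  proof (cases E)
    case Nil
    then show ?thesis by (auto simp: balanced_orientation_def)
  next
    case (Cons e R)
    obtain p q where e: "e = (p, q)" by force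
    show ?thesis
    proof (cases "p = q")
      case True
      have "even (edge_degree R x)" for x
        using less.prems[of x] Cons e True by auto
      then obtain S where "balanced_orientation S R"
        using less.hyps Cons by auto
      then show ?thesis
        using balanced_orientation_loop[of S R p] Cons e True by blast
    next
      case False
      have "odd (edge_degree R q)"
        using less.prems[of q] Cons e False by auto
      then have "edge_degree R q \<noteq> 0"
        by (metis dvd_0_right)
      then obtain e' where "e' \<in> set R" and e'_q: "fst e' = q \<or> snd e' = q"
        using edge_degree_nonzero_incident by fastforce
      then obtain xs ys where R: "R = xs @ e' # ys" by (meson split_list)
      define r where "r = (if fst e' = q then snd e' else fst e')"
      have e'_qr: "e' = (q, r) \<or> e' = (r, q)"
        using e'_q by (cases e') (auto simp: r_def)
      have "edge_degree E x = edge_degree ((p, r) # xs @ ys) x + 2 * of_bool (q = x)" for x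
        using Cons e R e'_qr by auto
      then have "even (edge_degree ((p, r) # xs @ ys) x)" for x
        using less.prems[of x] by simp
      moreover have "length ((p, r) # xs @ ys) < length E"
        using Cons R by simp
      ultimately obtain S where "balanced_orientation S ((p, r) # xs @ ys)"
        using less.hyps by blast
      moreover from this obtain s S' where "S = s # S'"
        by (cases S) (auto simp: balanced_orientation_def)
      ultimately show ?thesis
        using balanced_orientation_unshortcut[OF e'_qr] Cons e R by blast
    qed
  qed
qed

lemma polygonal_length_le_lipschitz:
  fixes \<gamma> :: "real \<Rightarrow> 'a::metric_space"
  assumes "C-lipschitz_on {0..1} \<gamma>" "sorted ts" "set ts \<subseteq> {0..1}" "ts \<noteq> []"
  shows "(\<Sum>(s,t)\<leftarrow>zip ts (tl ts). dist (\<gamma> s) (\<gamma> t)) \<le> C * (last ts - hd ts)"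
  using assms(2-4)
proof (induction ts rule: induct_list012)
  case (3 a b ts)
  have "dist (\<gamma> a) (\<gamma> b) \<le> C * dist a b"
    using assms(1) 3(4) by (auto simp: lipschitz_on_def)
  moreover have "dist a b = b - a"
    using 3(3) by (simp add: dist_real_def)
  ultimately show ?case
    using 3 by (simp add: algebra_simps)
qed auto

lemma curve_length_nonneg:
  fixes \<gamma> :: "real \<Rightarrow> 'a::metric_space"
  assumes lip: "C-lipschitz_on {0..1} \<gamma>"
  shows "curve_length \<gamma> \<ge> 0"
proof -
  let ?L = "{(\<Sum>(s,t)\<leftarrow>zip ts (tl ts). dist (\<gamma> s) (\<gamma> t)) | ts. sorted ts \<and> set ts \<subseteq> {0..1}}"
  have C: "C \<ge> 0"
    using lip by (simp add: lipschitz_on_def)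
  have "l \<le> C" if "l \<in> ?L" for l
  proof -
    obtain ts where ts: "sorted ts" "set ts \<subseteq> {0..1}"
      and l: "l = (\<Sum>(s,t)\<leftarrow>zip ts (tl ts). dist (\<gamma> s) (\<gamma> t))"
      using \<open>l \<in> ?L\<close> by blast
    show ?thesis
    proof (cases "ts = []")
      case False
      then have "last ts \<in> {0..1}" "hd ts \<in> {0..1}"
        using ts(2) by (meson last_in_set hd_in_set subsetD)+
      then have "C * (last ts - hd ts) \<le> C * 1"
        using C by (intro mult_left_mono) auto
      then show ?thesis
        using polygonal_length_le_lipschitz[OF lip ts False] l by simp
    qed (use C l in simp)
  qed
  moreover have "0 \<in> ?L"
    by (auto intro!: exI[of _ "[]"])
  ultimately show ?thesis
    unfolding curve_length_def by (meson bdd_aboveI cSup_upper2 order_refl)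
qed

lemma chain_mass_nonneg: "lip_chain U \<Longrightarrow> chain_mass U \<ge> 0"
  unfolding chain_mass_def lip_chain_def
  by (induction U) (auto intro!: add_nonneg_nonneg mult_nonneg_nonneg dest: curve_length_nonneg)

lemma FV_le_chain_mass:
  "lip_chain U \<Longrightarrow> chain_boundary U = T \<Longrightarrow> FV T \<le> chain_mass U"
  unfolding FV_def by (rule cInf_lower) (auto intro!: bdd_belowI[of _ 0] chain_mass_nonneg)

lemma FV_greatest:
  assumes "\<exists>U. lip_chain U \<and> chain_boundary U = T"
    and "\<And>U. lip_chain U \<Longrightarrow> chain_boundary U = T \<Longrightarrow> c \<le> chain_mass U"
  shows "c \<le> FV T"
  unfolding FV_def using assms by (intro cInf_greatest) auto

definition chain_scale :: "int \<Rightarrow> (int \<times> 'b) list \<Rightarrow> (int \<times> 'b) list" where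
  "chain_scale k U = map (\<lambda>(a, \<gamma>). (k * a, \<gamma>)) U"

lemma lip_chain_scale [simp]: "lip_chain (chain_scale k U) = lip_chain U"
  unfolding chain_scale_def lip_chain_def by auto

lemma chain_boundary_scale: "chain_boundary (chain_scale k U) = (\<lambda>x. k * chain_boundary U x)"
  unfolding chain_scale_def chain_boundary_def
  by (induction U) (auto simp: algebra_simps fun_eq_iff)

lemma chain_mass_scale: "chain_mass (chain_scale k U) = \<bar>k\<bar> * chain_mass U"
  unfolding chain_scale_def chain_mass_def
  by (induction U) (auto simp: algebra_simps abs_mult)

lemma FV_scale_le:
  assumes "\<exists>U. lip_chain U \<and> chain_boundary U = T"
  shows "FV (\<lambda>x. k * T x) \<le> \<bar>k\<bar> * FV T"
proof (cases "k = 0")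
  case True
  then show ?thesis
    using FV_le_chain_mass[of "[]"] by (simp add: lip_chain_def chain_boundary_def chain_mass_def)
next
  case False
  have "FV (\<lambda>x. k * T x) / \<bar>k\<bar> \<le> FV T"
  proof (rule FV_greatest[OF assms])
    fix U assume "lip_chain U" "chain_boundary U = T"
    then have "FV (\<lambda>x. k * T x) \<le> \<bar>k\<bar> * chain_mass U"
      using FV_le_chain_mass[of "chain_scale k U"] by (simp add: chain_boundary_scale chain_mass_scale)
    then show "FV (\<lambda>x. k * T x) / \<bar>k\<bar> \<le> chain_mass U"
      using False by (simp add: divide_le_eq mult.commute)
  qed
  then show ?thesis
    using False by (simp add: divide_le_eq mult.commute)
qed

subsection \<open>Halving a filling of an even boundary\<close>

definition boundary_at :: "'a \<Rightarrow> int \<times> (real \<Rightarrow> 'a) \<Rightarrow> int" where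
  "boundary_at x v = (if snd v 1 = x then fst v else 0) - (if snd v 0 = x then fst v else 0)"

lemma chain_boundary_eq_sum_boundary_at:
  "chain_boundary U x = (\<Sum>v\<leftarrow>U. boundary_at x v)"
  unfolding chain_boundary_def boundary_at_def by (induction U) auto

definition unit_chain :: "(int \<times> 'b) list \<Rightarrow> (int \<times> 'b) list" where
  "unit_chain U = concat (map (\<lambda>(a, \<gamma>). replicate (nat \<bar>a\<bar>) (sgn a, \<gamma>)) U)"

lemma unit_chain_Cons: "unit_chain ((a, \<gamma>) # U) = replicate (nat \<bar>a\<bar>) (sgn a, \<gamma>) @ unit_chain U"
  by (simp add: unit_chain_def)

lemma unit_chain_coeff: "v \<in> set (unit_chain U) \<Longrightarrow> fst v = 1 \<or> fst v = -1"
  unfolding unit_chain_def by (auto simp: sgn_if split: if_splits)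

lemma lip_chain_unit_chain: "lip_chain U \<Longrightarrow> lip_chain (unit_chain U)"
  unfolding lip_chain_def unit_chain_def by auto

lemma chain_boundary_unit_chain: "chain_boundary (unit_chain U) = chain_boundary U"
proof
  fix x show "chain_boundary (unit_chain U) x = chain_boundary U x"
  proof (induction U)
    case (Cons v U)
    obtain a \<gamma> where v: "v = (a, \<gamma>)" by force
    have "of_int (int (nat \<bar>a\<bar>)) * sgn a = a" by (simp add: abs_mult_sgn)
    then show ?case
      using Cons v by (simp add: unit_chain_Cons chain_boundary_def sum_list_replicate
          algebra_simps del: abs_mult_sgn)
  qed (simp add: unit_chain_def chain_boundary_def)
qed

lemma chain_mass_unit_chain: "chain_mass (unit_chain U) = chain_mass U"
proof (induction U)
  case (Cons v U)
  obtain a \<gamma> where v: "v = (a, \<gamma>)" by force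
  then show ?case
    using Cons by (cases "a = 0") (simp_all add: unit_chain_Cons sgn_if chain_mass_def
        sum_list_replicate algebra_simps del: abs_mult_sgn)
qed (simp add: unit_chain_def chain_mass_def)

definition chain_part :: "bool list \<Rightarrow> 'b list \<Rightarrow> 'b list" where
  "chain_part S V = map snd (filter fst (zip S V))"

lemma lip_chain_chain_part: "lip_chain V \<Longrightarrow> lip_chain (chain_part S V)"
  unfolding lip_chain_def chain_part_def by (auto dest: set_zip_rightD)

lemma sum_list_chain_parts:
  "length S = length V \<Longrightarrow>
     (\<Sum>v\<leftarrow>V. g v) = (\<Sum>v\<leftarrow>chain_part S V. g v) + (\<Sum>v\<leftarrow>chain_part (map Not S) V. g v :: 'c::comm_monoid_add)"
proof (induction V arbitrary: S)
  case (Cons v V)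
  then show ?case by (cases S) (auto simp: chain_part_def add_ac)
qed (simp add: chain_part_def)

lemma signed_sum_chain_parts:
  "length S = length V \<Longrightarrow>
     (\<Sum>(s,v)\<leftarrow>zip S V. (if s then 1 else -1) * g v) =
       (\<Sum>v\<leftarrow>chain_part S V. g v) - (\<Sum>v\<leftarrow>chain_part (map Not S) V. g v :: 'c::ring_1)"
proof (induction V arbitrary: S)
  case (Cons v V)
  then show ?case by (cases S) (auto simp: chain_part_def algebra_simps)
qed (simp add: chain_part_def)

definition curve_edge :: "int \<times> (real \<Rightarrow> 'a) \<Rightarrow> 'a \<times> 'a" where
  "curve_edge v = (if fst v = 1 then (snd v 0, snd v 1) else (snd v 1, snd v 0))"

lemma boundary_at_unit_curve:
  "fst v = 1 \<or> fst v = -1 \<Longrightarrow>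
     boundary_at x v = of_bool (snd (curve_edge v) = x) - of_bool (fst (curve_edge v) = x)"
  by (auto simp: curve_edge_def boundary_at_def)

lemma sum_oriented_flux_curve_edges:
  "\<forall>v\<in>set V. fst v = 1 \<or> fst v = -1 \<Longrightarrow>
     (\<Sum>(s,e)\<leftarrow>zip S (map curve_edge V). oriented_flux s e x) =
     (\<Sum>(s,v)\<leftarrow>zip S V. (if s then 1 else -1) * boundary_at x v)"
proof (induction V arbitrary: S)
  case (Cons v V)
  then show ?case
    by (cases S) (simp_all add: oriented_flux_def boundary_at_unit_curve)
qed simp

lemma unit_chain_split_even_boundary:
  assumes unit: "\<forall>v\<in>set V. fst v = 1 \<or> fst v = -1"
    and boundary: "chain_boundary V = (\<lambda>x. 2 * T x)"
  shows "\<exists>S. length S = length V \<and> chain_boundary (chain_part S V) = T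
           \<and> chain_boundary (chain_part (map Not S) V) = T"
proof -
  let ?E = "map curve_edge V"
  have edge_flux: "(\<Sum>e\<leftarrow>?E. of_bool (snd e = x) - of_bool (fst e = x)) = chain_boundary V x" for x
    unfolding chain_boundary_eq_sum_boundary_at map_map
    by (intro arg_cong[where f = sum_list] map_cong) (simp_all add: boundary_at_unit_curve unit)
  have "even (edge_degree ?E x)" for x
    using edge_flux[of x] boundary by (simp add: even_edge_degree_iff)
  then obtain S where S: "balanced_orientation S ?E"
    using balanced_orientation_exists by blast
  then have len: "length S = length V"
    by (simp add: balanced_orientation_def)
  have "(\<Sum>(s,e)\<leftarrow>zip S ?E. oriented_flux s e x) =
        (\<Sum>(s,v)\<leftarrow>zip S V. (if s then 1 else -1) * boundary_at x v)" for x
    using unit by (rule sum_oriented_flux_curve_edges)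
  then have "chain_boundary (chain_part S V) x = chain_boundary (chain_part (map Not S) V) x" for x
    using S signed_sum_chain_parts[OF len, of "boundary_at x"]
    by (simp add: balanced_orientation_def chain_boundary_eq_sum_boundary_at)
  moreover have "chain_boundary (chain_part S V) x + chain_boundary (chain_part (map Not S) V) x = 2 * T x" for x
    using sum_list_chain_parts[OF len, of "boundary_at x"] fun_cong[OF boundary, of x]
    by (simp add: chain_boundary_eq_sum_boundary_at)
  ultimately show ?thesis
    using len by (auto simp: fun_eq_iff)
qed

lemma halve_even_filling:
  assumes "lip_chain U" "chain_boundary U = (\<lambda>x. 2 * T x)"
  shows "\<exists>A. lip_chain A \<and> chain_boundary A = T \<and> 2 * chain_mass A \<le> chain_mass U"
proof -
  define V where "V = unit_chain U"
  have unit: "\<forall>v\<in>set V. fst v = 1 \<or> fst v = -1"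
    unfolding V_def by (intro ballI unit_chain_coeff)
  have "chain_boundary V = (\<lambda>x. 2 * T x)"
    using assms(2) by (simp add: V_def chain_boundary_unit_chain)
  then obtain S where len: "length S = length V"
    and A: "chain_boundary (chain_part S V) = T" and B: "chain_boundary (chain_part (map Not S) V) = T"
    using unit_chain_split_even_boundary[OF unit] by auto
  have lip: "lip_chain (chain_part S' V)" for S'
    using lip_chain_unit_chain[OF assms(1)] by (simp add: V_def lip_chain_chain_part)
  have "chain_mass V = chain_mass (chain_part S V) + chain_mass (chain_part (map Not S) V)"
    unfolding chain_mass_def by (rule sum_list_chain_parts[OF len])
  then have mass: "chain_mass U = chain_mass (chain_part S V) + chain_mass (chain_part (map Not S) V)"
    by (simp add: V_def chain_mass_unit_chain)
  show ?thesis
  proof (cases "chain_mass (chain_part S V) \<le> chain_mass (chain_part (map Not S) V)")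
    case True
    then show ?thesis
      using lip A mass by (intro exI[of _ "chain_part S V"]) simp
  next
    case False
    then show ?thesis
      using lip B mass by (intro exI[of _ "chain_part (map Not S) V"]) simp
  qed
qed

lemma FV_double_ge:
  assumes "\<exists>U. lip_chain U \<and> chain_boundary U = T"
  shows "2 * FV T \<le> FV (\<lambda>x. 2 * T x)"
proof (rule FV_greatest)
  from assms obtain U where "lip_chain U" "chain_boundary U = T"
    by blast
  then show "\<exists>U. lip_chain U \<and> chain_boundary U = (\<lambda>x. 2 * T x)"
    by (intro exI[of _ "chain_scale 2 U"]) (simp add: chain_boundary_scale)
next
  fix U assume "lip_chain U" "chain_boundary U = (\<lambda>x. 2 * T x)"
  then obtain A where "lip_chain A" "chain_boundary A = T" "2 * chain_mass A \<le> chain_mass U"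
    using halve_even_filling by blast
  then show "2 * FV T \<le> chain_mass U"
    using FV_le_chain_mass[of A T] by linarith
qed

theorem proposition4p1:
  fixes T :: "real ^ 'n \<Rightarrow> int"
  assumes "zero_chain T"
    and "\<exists>U. lip_chain U \<and> chain_boundary U = T"
  shows "FV T = FV (\<lambda>x. 2 * T x) / 2"
  using FV_scale_le[OF assms(2), of 2] FV_double_ge[OF assms(2)] by simp

end
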